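(* Let $G=(V,A)$ be an acyclic digraph. Then $|A| \le \sqrt{2\, p_{\#}(G)}\,|V|$, where $p_{\#}(G) = \frac{1}{2}\sum_{u\in V} |d^+(u)-d^-(u)|$.
   Context: Digraphs are simple. A digraph is acyclic if it contains no directed cycle. For a vertex $u$, $d^+(u)$ and $d^-(u)$ denote its outdegree and indegree. *)

theory Defs
  imports Complex_Main
begin

definition simple_digraph :: "'a set \<Rightarrow> ('a \<times> 'a) set \<Rightarrow> bool" where
  "simple_digraph V A \<longleftrightarrow> finite V \<and> A \<subseteq> V \<times> V \<and> (\<forall>u. (u, u) \<notin> A)"

definition out_deg :: "('a \<times> 'a) set \<Rightarrow> 'a \<Rightarrow> nat" where
  "out_deg A u = card {v. (u, v) \<in> A}"

definition in_deg :: "('a \<times> 'a) set \<Rightarrow> 'a \<Rightarrow> nat" where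
  "in_deg A u = card {v. (v, u) \<in> A}"

definition p_sharp :: "'a set \<Rightarrow> ('a \<times> 'a) set \<Rightarrow> real" where
  "p_sharp V A = (1/2) * (\<Sum>u\<in>V. \<bar>real (out_deg A u) - real (in_deg A u)\<bar>)"

end

theory Submission
  imports Defs "HOL-Analysis.Convex"
begin

text \<open>Number the vertices 0, ..., n - 1 along a topological order and let L be the total
  length of all arcs under this numbering. The out-neighbours of a vertex u lie at pairwise
  distinct positive distances from u, so they contribute at least d+(u)^2 / 2 to L. On the
  other hand L is the sum of pos(v) (d-(v) - d+(v)), and as the differences d-(v) - d+(v)
  sum to zero, the positions may be measured from the centre (n - 1) / 2, which gives
  L \<le> (n - 1) p_#(G). By Cauchy-Schwarz, |A|^2 \<le> n \<Sum> d+(u)^2 \<le> 2 n L \<le> 2 p_#(G) n^2.\<close>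

lemma wf_topological_numbering:
  assumes "finite V" "wf A"
  obtains pos :: "'a \<Rightarrow> nat"
  where "inj_on pos V" "pos ` V \<subseteq> {..<card V}"
    "\<And>u v. u \<in> V \<Longrightarrow> v \<in> V \<Longrightarrow> (u, v) \<in> A \<Longrightarrow> pos u < pos v"
proof -
  have "\<exists>pos :: 'a \<Rightarrow> nat. inj_on pos V \<and> pos ` V \<subseteq> {..<card V} \<and>
          (\<forall>u\<in>V. \<forall>v\<in>V. (u, v) \<in> A \<longrightarrow> pos u < pos v)"
    using assms(1)
  proof (induction rule: finite_remove_induct)
    case empty
    show ?case by auto
  next
    case (remove W)
    obtain z where z: "z \<in> W" "\<And>y. (y, z) \<in> A \<Longrightarrow> y \<notin> W"
      using wfE_min[OF assms(2)] remove.hyps(2) by blast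
    then obtain p where p: "inj_on p (W - {z})" "p ` (W - {z}) \<subseteq> {..<card W - 1}"
      "\<forall>u\<in>W - {z}. \<forall>v\<in>W - {z}. (u, v) \<in> A \<longrightarrow> p u < p v"
      using remove.IH[OF z(1)] remove.hyps(1) by auto
    define q where "q u = (if u = z then 0 else Suc (p u))" for u
    have "inj_on q W"
      using p(1) unfolding q_def inj_on_def by auto
    moreover have "q ` W \<subseteq> {..<card W}"
      using p(2) z(1) remove.hyps(1) card_gt_0_iff unfolding q_def by force
    moreover have "\<forall>u\<in>W. \<forall>v\<in>W. (u, v) \<in> A \<longrightarrow> q u < q v"
      using p(3) z(2) unfolding q_def by auto
    ultimately show ?case by blast
  qed
  then show thesis
    using that by blast
qed

lemma card_mult_Suc_card_le_double_sum:
  fixes S :: "nat set"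
  assumes "finite S" "0 \<notin> S"
  shows "card S * (card S + 1) \<le> 2 * \<Sum>S"
  using assms
proof (induction S rule: finite_linorder_max_induct)
  case empty
  show ?case by simp
next
  case (insert b S)
  then have "S \<subseteq> {1..<b}"
    by (auto simp: Suc_le_eq intro: gr0I)
  then have "card S \<le> b - 1"
    using card_mono[of "{1..<b}" S] by simp
  moreover have "b \<ge> 1" "b \<notin> S"
    using insert by (auto intro: gr0I)
  ultimately show ?case
    using insert by (simp add: algebra_simps)
qed

lemma card_mult_Suc_card_le_double_sum_gaps:
  fixes pos :: "'a \<Rightarrow> nat"
  assumes "finite S" "inj_on pos S" "\<And>v. v \<in> S \<Longrightarrow> k < pos v"
  shows "card S * (card S + 1) \<le> 2 * (\<Sum>v\<in>S. pos v - k)"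
proof -
  let ?gap = "\<lambda>v. pos v - k"
  have inj: "inj_on ?gap S"
  proof (rule inj_onI)
    fix x y
    assume "x \<in> S" "y \<in> S" "pos x - k = pos y - k"
    then have "pos x = pos y"
      using assms(3)[of x] assms(3)[of y] by simp
    then show "x = y"
      using assms(2) \<open>x \<in> S\<close> \<open>y \<in> S\<close> by (simp add: inj_on_eq_iff)
  qed
  have "0 \<notin> ?gap ` S"
    using assms(3) by force
  then have "card (?gap ` S) * (card (?gap ` S) + 1) \<le> 2 * \<Sum>(?gap ` S)"
    using assms(1) by (intro card_mult_Suc_card_le_double_sum) auto
  then show ?thesis
    using inj by (simp add: card_image sum.reindex)
qed

lemma sum_arcs_by_tail:
  assumes "finite V" "A \<subseteq> V \<times> V"
  shows "(\<Sum>a\<in>A. h a) = (\<Sum>u\<in>V. \<Sum>v\<in>{v. (u, v) \<in> A}. h (u, v))"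
proof -
  have "A = (SIGMA u:V. {v. (u, v) \<in> A})"
    using assms(2) by auto
  moreover have "\<forall>u\<in>V. finite {v. (u, v) \<in> A}"
    using assms by (auto intro: finite_subset)
  ultimately show ?thesis
    using assms(1) by (simp add: sum.Sigma)
qed

lemma sum_arcs_by_head:
  assumes "finite V" "A \<subseteq> V \<times> V"
  shows "(\<Sum>a\<in>A. h a) = (\<Sum>v\<in>V. \<Sum>u\<in>{u. (u, v) \<in> A}. h (u, v))"
proof -
  have "(\<Sum>a\<in>A. h a) = (\<Sum>a\<in>A\<inverse>. h (prod.swap a))"
    by (rule sum.reindex_bij_witness[of _ prod.swap prod.swap]) auto
  also have "\<dots> = (\<Sum>v\<in>V. \<Sum>u\<in>{u. (u, v) \<in> A}. h (u, v))"
    using sum_arcs_by_tail[of V "A\<inverse>" "\<lambda>a. h (prod.swap a)"] assms by auto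
  finally show ?thesis .
qed

lemma sum_fst_arcs_eq_out_deg:
  fixes g :: "'a \<Rightarrow> 'b::comm_semiring_1"
  assumes "finite V" "A \<subseteq> V \<times> V"
  shows "(\<Sum>a\<in>A. g (fst a)) = (\<Sum>u\<in>V. of_nat (out_deg A u) * g u)"
  using sum_arcs_by_tail[OF assms, of "\<lambda>a. g (fst a)"] by (simp add: out_deg_def)

lemma sum_snd_arcs_eq_in_deg:
  fixes g :: "'a \<Rightarrow> 'b::comm_semiring_1"
  assumes "finite V" "A \<subseteq> V \<times> V"
  shows "(\<Sum>a\<in>A. g (snd a)) = (\<Sum>v\<in>V. of_nat (in_deg A v) * g v)"
  using sum_arcs_by_head[OF assms, of "\<lambda>a. g (snd a)"] by (simp add: in_deg_def)

lemma sum_out_deg_eq_card: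
  assumes "finite V" "A \<subseteq> V \<times> V"
  shows "(\<Sum>u\<in>V. out_deg A u) = card A"
  using sum_fst_arcs_eq_out_deg[OF assms, of "\<lambda>_. 1 :: nat"] by simp

lemma sum_in_deg_eq_card:
  assumes "finite V" "A \<subseteq> V \<times> V"
  shows "(\<Sum>v\<in>V. in_deg A v) = card A"
  using sum_snd_arcs_eq_in_deg[OF assms, of "\<lambda>_. 1 :: nat"] by simp

lemma p_sharp_nonneg: "p_sharp V A \<ge> 0"
  by (simp add: p_sharp_def sum_nonneg)

lemma zero_sum_weighted_sum_le:
  fixes x f :: "'a \<Rightarrow> real"
  assumes "(\<Sum>v\<in>V. f v) = 0" "\<And>v. v \<in> V \<Longrightarrow> 0 \<le> x v \<and> x v \<le> b"
  shows "(\<Sum>v\<in>V. x v * f v) \<le> b / 2 * (\<Sum>v\<in>V. \<bar>f v\<bar>)"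
proof -
  have "(\<Sum>v\<in>V. (x v - b / 2) * f v) = (\<Sum>v\<in>V. x v * f v) - b / 2 * (\<Sum>v\<in>V. f v)"
    by (simp add: left_diff_distrib sum_subtractf sum_distrib_left mult.assoc)
  then have "(\<Sum>v\<in>V. x v * f v) = (\<Sum>v\<in>V. (x v - b / 2) * f v)"
    using assms(1) by simp
  also have "\<dots> \<le> (\<Sum>v\<in>V. b / 2 * \<bar>f v\<bar>)"
  proof (rule sum_mono)
    fix v
    assume "v \<in> V"
    then have "\<bar>x v - b / 2\<bar> \<le> b / 2"
      using assms(2) unfolding abs_le_iff by fastforce
    then have "\<bar>x v - b / 2\<bar> * \<bar>f v\<bar> \<le> b / 2 * \<bar>f v\<bar>"
      by (rule mult_right_mono) simp_all
    then show "(x v - b / 2) * f v \<le> b / 2 * \<bar>f v\<bar>"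
      by (metis abs_ge_self abs_mult order_trans)
  qed
  finally show ?thesis
    by (simp add: sum_distrib_left)
qed

definition arc_span :: "('a \<Rightarrow> nat) \<Rightarrow> ('a \<times> 'a) set \<Rightarrow> real" where
  "arc_span pos A = (\<Sum>(u, v)\<in>A. real (pos v) - real (pos u))"

lemma sum_out_deg_squared_le_arc_span:
  assumes "finite V" "A \<subseteq> V \<times> V" "inj_on pos V"
    and "\<And>u v. u \<in> V \<Longrightarrow> v \<in> V \<Longrightarrow> (u, v) \<in> A \<Longrightarrow> pos u < pos v"
  shows "(\<Sum>u\<in>V. real (out_deg A u) ^ 2) \<le> 2 * arc_span pos A"
proof -
  have "real (out_deg A u) ^ 2 \<le> 2 * (\<Sum>v\<in>{v. (u, v) \<in> A}. real (pos v) - real (pos u))"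
    if u: "u \<in> V" for u
  proof -
    let ?N = "{v. (u, v) \<in> A}"
    have N: "?N \<subseteq> V" "finite ?N"
      using assms(1,2) by (auto intro: finite_subset)
    have lt: "pos u < pos v" if "v \<in> ?N" for v
      using N(1) u assms(4) that by blast
    have "out_deg A u * (out_deg A u + 1) \<le> 2 * (\<Sum>v\<in>?N. pos v - pos u)"
      unfolding out_deg_def using N lt
      by (intro card_mult_Suc_card_le_double_sum_gaps inj_on_subset[OF assms(3)]) auto
    then have "out_deg A u ^ 2 \<le> 2 * (\<Sum>v\<in>?N. pos v - pos u)"
      by (simp add: power2_eq_square algebra_simps)
    then have "real (out_deg A u) ^ 2 \<le> 2 * real (\<Sum>v\<in>?N. pos v - pos u)"
      by (metis of_nat_le_iff of_nat_mult of_nat_numeral of_nat_power)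
    also have "real (\<Sum>v\<in>?N. pos v - pos u) = (\<Sum>v\<in>?N. real (pos v) - real (pos u))"
      unfolding of_nat_sum by (intro sum.cong refl) (metis lt less_imp_le of_nat_diff)
    finally show ?thesis .
  qed
  then have "(\<Sum>u\<in>V. real (out_deg A u) ^ 2)
      \<le> 2 * (\<Sum>u\<in>V. \<Sum>v\<in>{v. (u, v) \<in> A}. real (pos v) - real (pos u))"
    by (simp add: sum_distrib_left sum_mono)
  also have "\<dots> = 2 * arc_span pos A"
    using sum_arcs_by_tail[OF assms(1,2), of "\<lambda>(u, v). real (pos v) - real (pos u)"]
    by (simp add: arc_span_def)
  finally show ?thesis .
qed

lemma arc_span_le_p_sharp:
  assumes "finite V" "A \<subseteq> V \<times> V" "pos ` V \<subseteq> {..<card V}"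
  shows "arc_span pos A \<le> (real (card V) - 1) * p_sharp V A"
proof -
  define f where "f v = real (in_deg A v) - real (out_deg A v)" for v
  have "arc_span pos A = (\<Sum>a\<in>A. real (pos (snd a))) - (\<Sum>a\<in>A. real (pos (fst a)))"
    by (simp add: arc_span_def case_prod_beta sum_subtractf)
  also have "\<dots> = (\<Sum>v\<in>V. real (in_deg A v) * real (pos v))
      - (\<Sum>v\<in>V. real (out_deg A v) * real (pos v))"
    using sum_snd_arcs_eq_in_deg[OF assms(1,2), of "\<lambda>v. real (pos v)"]
      sum_fst_arcs_eq_out_deg[OF assms(1,2), of "\<lambda>v. real (pos v)"] by simp
  also have "\<dots> = (\<Sum>v\<in>V. real (pos v) * f v)"
    by (simp add: f_def algebra_simps sum_subtractf)
  also have "\<dots> \<le> (real (card V) - 1) / 2 * (\<Sum>v\<in>V. \<bar>f v\<bar>)"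
  proof (rule zero_sum_weighted_sum_le)
    show "(\<Sum>v\<in>V. f v) = 0"
      using sum_in_deg_eq_card[OF assms(1,2)] sum_out_deg_eq_card[OF assms(1,2)]
      by (simp add: f_def sum_subtractf flip: of_nat_sum)
    show "0 \<le> real (pos v) \<and> real (pos v) \<le> real (card V) - 1" if "v \<in> V" for v
      using assms(3) that by force
  qed
  also have "\<dots> = (real (card V) - 1) * p_sharp V A"
    by (simp add: p_sharp_def f_def abs_minus_commute)
  finally show ?thesis .
qed

theorem proposition1p2:
  fixes V :: "'a set" and A :: "('a \<times> 'a) set"
  assumes "simple_digraph V A"
    and "acyclic A"
  shows "real (card A) \<le> sqrt (2 * p_sharp V A) * real (card V)"
proof -
  have V: "finite V" "A \<subseteq> V \<times> V"
    using assms(1) by (auto simp: simple_digraph_def)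
  then have "wf A"
    using assms(2) by (intro finite_acyclic_wf) (auto intro: finite_subset)
  then obtain pos where pos: "inj_on pos V" "pos ` V \<subseteq> {..<card V}"
    "\<And>u v. u \<in> V \<Longrightarrow> v \<in> V \<Longrightarrow> (u, v) \<in> A \<Longrightarrow> pos u < pos v"
    using wf_topological_numbering V(1) by blast
  define n where "n = real (card V)"
  define p where "p = p_sharp V A"
  have "p \<ge> 0"
    unfolding p_def by (rule p_sharp_nonneg)
  have "real (card A) ^ 2 = (\<Sum>u\<in>V. real (out_deg A u)) ^ 2"
    by (simp flip: sum_out_deg_eq_card[OF V] of_nat_sum)
  also have "\<dots> \<le> (\<Sum>u\<in>V. real (out_deg A u) ^ 2) * n"
    unfolding n_def by (rule sum_squared_le_sum_of_squares)
  also have "\<dots> \<le> 2 * ((n - 1) * p) * n"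
    using sum_out_deg_squared_le_arc_span[OF V pos(1,3)] arc_span_le_p_sharp[OF V pos(2)]
    unfolding n_def p_def by (intro mult_right_mono) auto
  also have "\<dots> \<le> 2 * (n * p) * n"
    using \<open>p \<ge> 0\<close> by (intro mult_right_mono mult_left_mono) (auto simp: n_def)
  also have "\<dots> = (sqrt (2 * p) * n) ^ 2"
    using \<open>p \<ge> 0\<close> by (simp add: power_mult_distrib power2_eq_square)
  finally have "real (card A) \<le> sqrt (2 * p) * n"
    by (rule power2_le_imp_le) (simp add: \<open>p \<ge> 0\<close> n_def)
  then show ?thesis
    by (simp only: n_def p_def)
qed

end
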